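(* Let $G$ be a bipartite distance-regular graph of diameter $d$ which is an antipodal double cover, and let $B$ be its tridiagonal intersection matrix. If $\ker B\neq 0$, then $d$ is even. Moreover, in this case $\ker B$ has a basis consisting of a single vector $\boldsymbol{u}=(u_0,u_1,\dots,u_d)^T$ with $u_0=1$, $u_1=0$ and $u_d=(-1)^{d/2}$.
   Context: A connected graph $G$ of diameter $d$ is distance-regular if there are non-negative integers $b_i,c_i$ ($0\le i\le d$) such that for any two vertices $x,y$ at distance $i$, $y$ has exactly $c_i$ neighbours at distance $i-1$ from $x$ and exactly $b_i$ neighbours at distance $i+1$ from $x$. $G$ is $r$-regular with $r=b_0$, $c_0=b_d=0$, $c_1=1$, and $a_i=r-b_i-c_i$. $B$ is the $(d+1)\times(d+1)$ tridiagonal matrix indexed by $0,\dots,d$ with $B_{i,i}=a_i$, $B_{i,i+1}=c_{i+1}$, $B_{i+1,i}=b_i$, all other entries $0$. $G$ is an antipodal double cover if for every vertex $x$ there is exactly one vertex at distance $d$ from $x$. *)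

theory Defs
  imports Main "Jordan_Normal_Form.Matrix_Kernel"
begin

definition simple_graph :: "'a set \<Rightarrow> ('a \<Rightarrow> 'a \<Rightarrow> bool) \<Rightarrow> bool" where
  "simple_graph V E \<longleftrightarrow> finite V \<and> V \<noteq> {} \<and>
     (\<forall>x\<in>V. \<forall>y\<in>V. E x y \<longrightarrow> E y x) \<and> (\<forall>x\<in>V. \<not> E x x)"

definition adj_rel :: "'a set \<Rightarrow> ('a \<Rightarrow> 'a \<Rightarrow> bool) \<Rightarrow> ('a \<times> 'a) set" where
  "adj_rel V E = {(x, y). x \<in> V \<and> y \<in> V \<and> E x y}"

definition graph_connected :: "'a set \<Rightarrow> ('a \<Rightarrow> 'a \<Rightarrow> bool) \<Rightarrow> bool" where
  "graph_connected V E \<longleftrightarrow> (\<forall>x\<in>V. \<forall>y\<in>V. (x, y) \<in> (adj_rel V E)\<^sup>*)"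

definition gdist :: "'a set \<Rightarrow> ('a \<Rightarrow> 'a \<Rightarrow> bool) \<Rightarrow> 'a \<Rightarrow> 'a \<Rightarrow> nat" where
  "gdist V E x y = (LEAST n. (x, y) \<in> (adj_rel V E) ^^ n)"

definition diameter :: "'a set \<Rightarrow> ('a \<Rightarrow> 'a \<Rightarrow> bool) \<Rightarrow> nat" where
  "diameter V E = Max {gdist V E x y | x y. x \<in> V \<and> y \<in> V}"

definition distance_regular ::
  "'a set \<Rightarrow> ('a \<Rightarrow> 'a \<Rightarrow> bool) \<Rightarrow> nat \<Rightarrow> (nat \<Rightarrow> nat) \<Rightarrow> (nat \<Rightarrow> nat) \<Rightarrow> bool" where
  "distance_regular V E d b c \<longleftrightarrow>
     simple_graph V E \<and> graph_connected V E \<and> diameter V E = d \<and>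
     c 0 = 0 \<and> b d = 0 \<and>
     (\<forall>i\<le>d. \<forall>x\<in>V. \<forall>y\<in>V. gdist V E x y = i \<longrightarrow>
        card {z \<in> V. E y z \<and> gdist V E x z + 1 = i} = c i \<and>
        card {z \<in> V. E y z \<and> gdist V E x z = i + 1} = b i)"

definition bipartite :: "'a set \<Rightarrow> ('a \<Rightarrow> 'a \<Rightarrow> bool) \<Rightarrow> bool" where
  "bipartite V E \<longleftrightarrow> (\<exists>f :: 'a \<Rightarrow> bool. \<forall>x\<in>V. \<forall>y\<in>V. E x y \<longrightarrow> f x \<noteq> f y)"

definition antipodal_double_cover :: "'a set \<Rightarrow> ('a \<Rightarrow> 'a \<Rightarrow> bool) \<Rightarrow> nat \<Rightarrow> bool" where
  "antipodal_double_cover V E d \<longleftrightarrow> (\<forall>x\<in>V. \<exists>!y. y \<in> V \<and> gdist V E x y = d)"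

text \<open>Tridiagonal intersection matrix B, indexed 0..d, with a_i = r - b_i - c_i, r = b_0.\<close>
definition intersection_matrix :: "nat \<Rightarrow> (nat \<Rightarrow> nat) \<Rightarrow> (nat \<Rightarrow> nat) \<Rightarrow> real mat" where
  "intersection_matrix d b c = mat (d + 1) (d + 1) (\<lambda>(i, j).
     if i = j then real (b 0) - real (b i) - real (c i)
     else if j = i + 1 then real (c (i + 1))
     else if i = j + 1 then real (b j)
     else 0)"

end

theory Submission
  imports Defs
begin

(* Bipartiteness forces a_i = 0, so B u = 0 reads c_(k+1) u_(k+1) + b_(k-1) u_(k-1) = 0 for
   k = 0..d.  As c_i > 0 (i >= 1) and b_i > 0 (i < d), a kernel vector is determined by u_0
   and vanishes at odd indices but at no even one; the last row b_(d-1) u_(d-1) = 0 therefore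
   rules out odd d unless the kernel is trivial.  In an antipodal double cover the distances
   from any vertex to x and to its antipode sum to d, whence b_i = c_(d-i), and the product
   formula for u_d collapses to (-1)^(d/2). *)

lemma adj_rel_sym:
  assumes "simple_graph V E" "(x, y) \<in> adj_rel V E"
  shows "(y, x) \<in> adj_rel V E"
  using assms by (auto simp: simple_graph_def adj_rel_def)

lemma relpow_adj_rel_sym:
  assumes "simple_graph V E" "(x, y) \<in> adj_rel V E ^^ n"
  shows "(y, x) \<in> adj_rel V E ^^ n"
  using assms(2)
proof (induction n arbitrary: y)
  case (Suc n)
  then obtain z where "(x, z) \<in> adj_rel V E ^^ n" "(z, y) \<in> adj_rel V E"
    by auto
  then show ?case
    using Suc.IH adj_rel_sym[OF assms(1)] by (meson relpow_Suc_I2)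
qed simp

lemma gdist_relpow:
  assumes "graph_connected V E" "x \<in> V" "y \<in> V"
  shows "(x, y) \<in> adj_rel V E ^^ gdist V E x y"
proof -
  obtain n where "(x, y) \<in> adj_rel V E ^^ n"
    using assms unfolding graph_connected_def rtrancl_power by blast
  then show ?thesis unfolding gdist_def by (rule LeastI)
qed

lemma gdist_le_relpow:
  assumes "(x, y) \<in> adj_rel V E ^^ n"
  shows "gdist V E x y \<le> n"
  unfolding gdist_def using assms by (rule Least_le)

lemma gdist_sym:
  assumes "simple_graph V E" "graph_connected V E" "x \<in> V" "y \<in> V"
  shows "gdist V E x y = gdist V E y x"
  using gdist_le_relpow[OF relpow_adj_rel_sym[OF assms(1) gdist_relpow[OF assms(2,3,4)]]]
    gdist_le_relpow[OF relpow_adj_rel_sym[OF assms(1) gdist_relpow[OF assms(2,4,3)]]]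
  by simp

lemma gdist_eq_0_iff:
  assumes "graph_connected V E" "x \<in> V" "y \<in> V"
  shows "gdist V E x y = 0 \<longleftrightarrow> x = y"
  using gdist_relpow[OF assms] gdist_le_relpow[where x = x and y = x and n = 0] by auto

lemma gdist_triangle:
  assumes "graph_connected V E" "x \<in> V" "y \<in> V" "z \<in> V"
  shows "gdist V E x z \<le> gdist V E x y + gdist V E y z"
  using gdist_le_relpow[OF relpow_trans[OF gdist_relpow[OF assms(1,2,3)] gdist_relpow[OF assms(1,3,4)]]] .

lemma gdist_adj_le:
  assumes "graph_connected V E" "x \<in> V" "y \<in> V" "z \<in> V" "E y z"
  shows "gdist V E x z \<le> gdist V E x y + 1"
proof -
  have "gdist V E y z \<le> 1"
    using assms by (intro gdist_le_relpow) (auto simp: adj_rel_def)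
  then show ?thesis using gdist_triangle[OF assms(1-4)] by simp
qed

lemma gdist_adj_eq_1:
  assumes "simple_graph V E" "graph_connected V E" "y \<in> V" "z \<in> V" "E y z"
  shows "gdist V E y z = 1"
proof -
  have "gdist V E y z \<le> 1"
    using gdist_adj_le[OF assms(2,3,3,4,5)] gdist_eq_0_iff[OF assms(2,3,3)] by simp
  moreover have "y \<noteq> z" using assms(1,3,5) by (auto simp: simple_graph_def)
  ultimately show ?thesis using gdist_eq_0_iff[OF assms(2,3,4)] by simp
qed

lemma gdist_SucE:
  assumes "simple_graph V E" "graph_connected V E" "x \<in> V" "y \<in> V"
    and "gdist V E x y = Suc j"
  obtains z where "z \<in> V" "E y z" "gdist V E x z = j"
proof -
  obtain z where walk: "(x, z) \<in> adj_rel V E ^^ j" and edge: "(z, y) \<in> adj_rel V E"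
    using gdist_relpow[OF assms(2-4)] assms(5) by auto
  have z: "z \<in> V" "E z y" "E y z"
    using edge adj_rel_sym[OF assms(1) edge] by (auto simp: adj_rel_def)
  have "gdist V E x z \<le> j" using walk by (rule gdist_le_relpow)
  moreover have "gdist V E x y \<le> gdist V E x z + 1"
    using gdist_adj_le[OF assms(2,3) z(1) assms(4) z(2)] .
  ultimately show ?thesis using that z assms(5) by simp
qed

lemma gdist_intermediate:
  assumes "simple_graph V E" "graph_connected V E" "x \<in> V" "y \<in> V"
    and "i \<le> gdist V E x y"
  shows "\<exists>z\<in>V. gdist V E x z = i"
  using assms(4,5)
proof (induction "gdist V E x y" arbitrary: y)
  case (Suc j)
  obtain z where "z \<in> V" "gdist V E x z = j"
    using gdist_SucE[OF assms(1-3) Suc.prems(1) Suc.hyps(2)[symmetric]] .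
  then show ?case
    using Suc.hyps(1)[of z] Suc.prems Suc.hyps(2) by (cases "i = Suc j") auto
qed auto

lemma bipartite_relpow_parity:
  fixes f :: "'a \<Rightarrow> bool"
  assumes "\<forall>x\<in>V. \<forall>y\<in>V. E x y \<longrightarrow> f x \<noteq> f y" "(x, y) \<in> adj_rel V E ^^ n"
  shows "f x = f y \<longleftrightarrow> even n"
  using assms(2)
proof (induction n arbitrary: y)
  case (Suc n)
  then obtain z where "(x, z) \<in> adj_rel V E ^^ n" "(z, y) \<in> adj_rel V E"
    by auto
  moreover from this(2) have "f y = (\<not> f z)"
    using assms(1) by (auto simp: adj_rel_def)
  ultimately show ?case using Suc.IH by (metis (full_types) even_Suc)
qed simp

lemma bipartite_gdist_adj_neq:
  assumes "bipartite V E" "graph_connected V E" "x \<in> V" "y \<in> V" "z \<in> V" "E y z"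
  shows "gdist V E x y \<noteq> gdist V E x z"
proof
  obtain f :: "'a \<Rightarrow> bool" where f: "\<forall>x\<in>V. \<forall>y\<in>V. E x y \<longrightarrow> f x \<noteq> f y"
    using assms(1) unfolding bipartite_def by blast
  assume "gdist V E x y = gdist V E x z"
  then have "f y = f z"
    using bipartite_relpow_parity[OF f gdist_relpow[OF assms(2,3,4)]]
      bipartite_relpow_parity[OF f gdist_relpow[OF assms(2,3,5)]]
    by (cases "f x"; cases "f y"; cases "f z") auto
  then show False using f assms(4-6) by blast
qed

locale distance_regular_graph =
  fixes V :: "'a set" and E :: "'a \<Rightarrow> 'a \<Rightarrow> bool" and d :: nat and b c :: "nat \<Rightarrow> nat"
  assumes distance_regular: "distance_regular V E d b c"
begin

lemma simple: "simple_graph V E"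
  and connected: "graph_connected V E"
  and diameter: "diameter V E = d"
  and intersection_numbers: "\<And>i x y. i \<le> d \<Longrightarrow> x \<in> V \<Longrightarrow> y \<in> V \<Longrightarrow> gdist V E x y = i \<Longrightarrow>
     card {z \<in> V. E y z \<and> gdist V E x z + 1 = i} = c i \<and>
     card {z \<in> V. E y z \<and> gdist V E x z = i + 1} = b i"
  using distance_regular unfolding distance_regular_def by blast+

lemma finite: "finite V"
  using simple by (simp add: simple_graph_def)

lemma card_closer:
  assumes "i \<le> d" "x \<in> V" "y \<in> V" "gdist V E x y = i"
  shows "card {z \<in> V. E y z \<and> gdist V E x z + 1 = i} = c i"
  using intersection_numbers[OF assms] by blast

lemma card_further:
  assumes "i \<le> d" "x \<in> V" "y \<in> V" "gdist V E x y = i"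
  shows "card {z \<in> V. E y z \<and> gdist V E x z = i + 1} = b i"
  using intersection_numbers[OF assms] by blast

lemma finite_gdists: "finite {gdist V E x y | x y. x \<in> V \<and> y \<in> V}"
proof -
  have "{gdist V E x y | x y. x \<in> V \<and> y \<in> V} = (\<lambda>(x, y). gdist V E x y) ` (V \<times> V)"
    by auto
  then show ?thesis using finite by simp
qed

lemma gdist_le_diameter:
  assumes "x \<in> V" "y \<in> V"
  shows "gdist V E x y \<le> d"
  using Max_ge[OF finite_gdists] assms diameter unfolding diameter_def by blast

lemma exists_gdist_eq:
  assumes "i \<le> d"
  shows "\<exists>x\<in>V. \<exists>y\<in>V. gdist V E x y = i"
proof -
  obtain v where "v \<in> V" using simple by (auto simp: simple_graph_def)
  then have "d \<in> {gdist V E x y | x y. x \<in> V \<and> y \<in> V}"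
    using Max_in[OF finite_gdists] diameter unfolding diameter_def by blast
  then obtain x y where "x \<in> V" "y \<in> V" "gdist V E x y = d" by blast
  then show ?thesis
    using gdist_intermediate[OF simple connected, of x y i] assms by auto
qed

lemma card_Collect_pos:
  assumes "z \<in> V" "P z"
  shows "card {z \<in> V. P z} > 0"
  using assms finite by (auto simp: card_gt_0_iff)

lemma c_pos:
  assumes "1 \<le> i" "i \<le> d"
  shows "c i > 0"
proof -
  obtain x y where xy: "x \<in> V" "y \<in> V" "gdist V E x y = i"
    using exists_gdist_eq[OF assms(2)] by blast
  then have "gdist V E x y = Suc (i - 1)" using assms(1) by simp
  then obtain z where "z \<in> V" "E y z" "gdist V E x z = i - 1"
    using gdist_SucE[OF simple connected xy(1,2)] by blast
  then have "card {z \<in> V. E y z \<and> gdist V E x z + 1 = i} > 0"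
    using assms(1) by (intro card_Collect_pos) auto
  then show ?thesis using card_closer[OF assms(2) xy] by simp
qed

lemma b_pos:
  assumes "i < d"
  shows "b i > 0"
proof -
  obtain x y where xy: "x \<in> V" "y \<in> V" "gdist V E x y = Suc i"
    using exists_gdist_eq[of "Suc i"] assms by auto
  obtain z where z: "z \<in> V" "E y z" "gdist V E x z = i"
    using gdist_SucE[OF simple connected xy] by blast
  have "E z y" using z xy simple by (auto simp: simple_graph_def)
  then have "card {w \<in> V. E z w \<and> gdist V E x w = i + 1} > 0"
    using xy by (intro card_Collect_pos) auto
  then show ?thesis using card_further[OF _ xy(1) z(1,3)] assms by simp
qed

lemma further_adjE:
  assumes "x \<in> V" "y \<in> V" "gdist V E x y < d"
  obtains w where "w \<in> V" "E y w" "gdist V E x w = gdist V E x y + 1"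
proof -
  have "card {w \<in> V. E y w \<and> gdist V E x w = gdist V E x y + 1} > 0"
    using card_further[OF _ assms(1,2) refl] b_pos[OF assms(3)] assms(3) by simp
  then show ?thesis using that by (auto simp: card_gt_0_iff)
qed

lemma b0_eq_b_plus_c_if_bipartite:
  assumes "bipartite V E" "i \<le> d"
  shows "b 0 = b i + c i"
proof -
  obtain x y where xy: "x \<in> V" "y \<in> V" "gdist V E x y = i"
    using exists_gdist_eq[OF assms(2)] by blast
  let ?N = "{z \<in> V. E y z}"
  let ?closer = "{z \<in> V. E y z \<and> gdist V E x z + 1 = i}"
  let ?further = "{z \<in> V. E y z \<and> gdist V E x z = i + 1}"
  have "{z \<in> V. E y z \<and> gdist V E y z = 0 + 1} = ?N"
    using gdist_adj_eq_1[OF simple connected xy(2)] by auto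
  then have degree: "card ?N = b 0"
    using card_further[of 0 y y] xy(2) gdist_eq_0_iff[OF connected xy(2,2)] by simp
  have "gdist V E x z + 1 = i \<or> gdist V E x z = i + 1" if "z \<in> V" "E y z" for z
  proof -
    have "E z y" using that xy(2) simple by (auto simp: simple_graph_def)
    then show ?thesis
      using gdist_adj_le[OF connected xy(1,2) that] gdist_adj_le[OF connected xy(1) that(1) xy(2)]
        bipartite_gdist_adj_neq[OF assms(1) connected xy(1,2) that] xy(3)
      by linarith
  qed
  then have "?N = ?closer \<union> ?further" by auto
  moreover have "card (?closer \<union> ?further) = card ?closer + card ?further"
    using finite by (intro card_Un_disjoint) auto
  ultimately have "card ?N = card ?closer + card ?further" by simp
  then show ?thesis using degree card_closer[OF assms(2) xy] card_further[OF assms(2) xy] by simp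
qed

lemma gdist_antipode:
  assumes "antipodal_double_cover V E d"
    and "x \<in> V" "x' \<in> V" "gdist V E x x' = d" "z \<in> V"
  shows "gdist V E x z + gdist V E z x' = d"
proof -
  (* Moving away from x is possible below distance d (b_i > 0) and can only end at x',
     the unique vertex at distance d. *)
  have outward: "gdist V E z x' \<le> k" if "z \<in> V" "gdist V E x z + k = d" for z k
    using that
  proof (induction k arbitrary: z)
    case 0
    then have "z = x'" using assms(1-4) unfolding antipodal_double_cover_def by auto
    then show ?case using gdist_eq_0_iff[OF connected assms(3,3)] by simp
  next
    case (Suc k)
    obtain w where w: "w \<in> V" "E z w" "gdist V E x w = gdist V E x z + 1"
      using further_adjE[OF assms(2) Suc.prems(1)] Suc.prems(2) by auto
    have "E w z" using w Suc.prems(1) simple by (auto simp: simple_graph_def)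
    have "gdist V E w x' \<le> k" using Suc.IH[OF w(1)] w(3) Suc.prems(2) by simp
    moreover have "gdist V E x' z \<le> gdist V E x' w + 1"
      using gdist_adj_le[OF connected assms(3) w(1) Suc.prems(1) \<open>E w z\<close>] .
    ultimately show ?case
      using gdist_sym[OF simple connected Suc.prems(1) assms(3)]
        gdist_sym[OF simple connected w(1) assms(3)] by simp
  qed
  have le_d: "gdist V E x z \<le> d" using gdist_le_diameter[OF assms(2,5)] .
  then have "gdist V E z x' \<le> d - gdist V E x z"
    using outward[OF assms(5)] by simp
  moreover have "d \<le> gdist V E x z + gdist V E z x'"
    using gdist_triangle[OF connected assms(2,5,3)] assms(4) by simp
  ultimately show ?thesis using le_d by linarith
qed

lemma b_eq_c_reflect:
  assumes "antipodal_double_cover V E d" "i \<le> d"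
  shows "b i = c (d - i)"
proof -
  obtain x y where xy: "x \<in> V" "y \<in> V" "gdist V E x y = i"
    using exists_gdist_eq[OF assms(2)] by blast
  obtain x' where x': "x' \<in> V" "gdist V E x x' = d"
    using assms(1) xy(1) unfolding antipodal_double_cover_def by blast
  have sum: "gdist V E x z + gdist V E x' z = d" if "z \<in> V" for z
    using gdist_antipode[OF assms(1) xy(1) x' that] gdist_sym[OF simple connected that x'(1)] by simp
  have "gdist V E x' y = d - i" using sum[OF xy(2)] xy(3) by simp
  moreover have "{z \<in> V. E y z \<and> gdist V E x z = i + 1} = {z \<in> V. E y z \<and> gdist V E x' z + 1 = d - i}"
    using sum assms(2) by force
  ultimately show ?thesis
    using card_further[OF assms(2) xy] card_closer[of "d - i" x' y] x'(1) xy(2) by simp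
qed

end

lemma mem_mat_kernel_iff:
  assumes "A \<in> carrier_mat nr nc"
  shows "v \<in> mat_kernel A \<longleftrightarrow> v \<in> carrier_vec nc \<and> (\<forall>i<nr. (A *\<^sub>v v) $ i = 0)"
proof -
  have "A *\<^sub>v v = 0\<^sub>v nr \<longleftrightarrow> (\<forall>i<nr. (A *\<^sub>v v) $ i = 0)"
    using assms by (metis carrier_matD(1) dim_mult_mat_vec eq_vecI index_zero_vec zero_carrier_vec carrier_vecD)
  then show ?thesis unfolding mat_kernel[OF assms] by blast
qed

lemma intersection_matrix_carrier: "intersection_matrix d b c \<in> carrier_mat (d + 1) (d + 1)"
  by (simp add: intersection_matrix_def)

lemma intersection_matrix_mult_vec_nth:
  assumes v: "v \<in> carrier_vec (d + 1)" and k: "k \<le> d"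
  shows "(intersection_matrix d b c *\<^sub>v v) $ k =
      (real (b 0) - real (b k) - real (c k)) * v $ k
    + (if k < d then real (c (k + 1)) * v $ (k + 1) else 0)
    + (if 0 < k then real (b (k - 1)) * v $ (k - 1) else 0)" (is "_ = ?rhs")
proof -
  have "(intersection_matrix d b c *\<^sub>v v) $ k = (\<Sum>j<d + 1. intersection_matrix d b c $$ (k, j) * v $ j)"
    using v k by (simp add: intersection_matrix_def scalar_prod_def lessThan_atLeast0)
  also have "\<dots> = (\<Sum>j<d + 1. (if j = k then (real (b 0) - real (b k) - real (c k)) * v $ j else 0)
        + (if j = k + 1 then real (c (k + 1)) * v $ j else 0)
        + (if j = k - 1 \<and> 0 < k then real (b (k - 1)) * v $ j else 0))"
    using k by (intro sum.cong) (auto simp: intersection_matrix_def)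
  also have "\<dots> = ?rhs"
    using k by (cases "0 < k") (auto simp: sum.distrib simp del: sum.lessThan_Suc)
  finally show ?thesis .
qed

(* u_(k+2) is forced by row k+1 of B u = 0 when a_(k+1) = 0. *)
fun kernel_seq :: "(nat \<Rightarrow> nat) \<Rightarrow> (nat \<Rightarrow> nat) \<Rightarrow> nat \<Rightarrow> real" where
  "kernel_seq b c 0 = 1"
| "kernel_seq b c (Suc 0) = 0"
| "kernel_seq b c (Suc (Suc k)) = - real (b k) * kernel_seq b c k / real (c (k + 2))"

definition kernel_vec :: "nat \<Rightarrow> (nat \<Rightarrow> nat) \<Rightarrow> (nat \<Rightarrow> nat) \<Rightarrow> real vec" where
  "kernel_vec d b c = vec (d + 1) (kernel_seq b c)"

lemma kernel_seq_odd: "odd j \<Longrightarrow> kernel_seq b c j = 0"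
  by (induction b c j rule: kernel_seq.induct) auto

lemma kernel_seq_even:
  "kernel_seq b c (2 * m) =
     (-1) ^ m * (\<Prod>k<m. real (b (2 * k))) / (\<Prod>k<m. real (c (2 * k + 2)))"
  by (induction m) (simp_all add: mult_2)

(* b_0 = b_i + c_i says a_i = 0. *)
locale bipartite_intersection_array =
  fixes d :: nat and b c :: "nat \<Rightarrow> nat"
  assumes b0_eq: "\<And>i. i \<le> d \<Longrightarrow> b 0 = b i + c i"
    and c_pos: "\<And>i. 1 \<le> i \<Longrightarrow> i \<le> d \<Longrightarrow> c i > 0"
    and b_pos: "\<And>i. i < d \<Longrightarrow> b i > 0"
begin

abbreviation B :: "real mat" where
  "B \<equiv> intersection_matrix d b c"

lemma B_mult_vec_nth:
  assumes "v \<in> carrier_vec (d + 1)" "k \<le> d"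
  shows "(B *\<^sub>v v) $ k =
      (if k < d then real (c (k + 1)) * v $ (k + 1) else 0)
    + (if 0 < k then real (b (k - 1)) * v $ (k - 1) else 0)"
  using intersection_matrix_mult_vec_nth[OF assms] b0_eq[OF assms(2)] by simp

lemma mem_kernel_iff:
  "v \<in> mat_kernel B \<longleftrightarrow> v \<in> carrier_vec (d + 1) \<and>
     (\<forall>k\<le>d. (if k < d then real (c (k + 1)) * v $ (k + 1) else 0)
       + (if 0 < k then real (b (k - 1)) * v $ (k - 1) else 0) = 0)" (is "_ \<longleftrightarrow> ?rhs")
proof -
  have "v \<in> mat_kernel B \<longleftrightarrow> v \<in> carrier_vec (d + 1) \<and> (\<forall>k\<le>d. (B *\<^sub>v v) $ k = 0)"
    by (simp only: mem_mat_kernel_iff[OF intersection_matrix_carrier] Suc_eq_plus1[symmetric] less_Suc_eq_le)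
  also have "\<dots> \<longleftrightarrow> ?rhs"
    by (rule conj_cong[OF refl]) (simp add: B_mult_vec_nth del: index_mult_mat_vec)
  finally show ?thesis .
qed

lemma kernel_seq_even_nonzero:
  assumes "even j" "j \<le> d"
  shows "kernel_seq b c j \<noteq> 0"
proof -
  obtain m where j: "j = 2 * m" using assms(1) by blast
  have "b (2 * k) \<noteq> 0" "c (2 * k + 2) \<noteq> 0" if "k < m" for k
    using that b_pos[of "2 * k"] c_pos[of "2 * k + 2"] assms(2) j by auto
  then show ?thesis by (simp add: j kernel_seq_even)
qed

lemma kernel_nth_eq:
  assumes v: "v \<in> mat_kernel B"
  shows "j \<le> d \<Longrightarrow> v $ j = v $ 0 * kernel_seq b c j"
proof (induction j rule: nat_induct2)
  case 1
  then show ?case using v c_pos[of 1] by (auto simp: mem_kernel_iff dest!: spec[of _ 0])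
next
  case (step m)
  have "real (c (m + 2)) * v $ (m + 2) + real (b m) * v $ m = 0"
    using v step.prems by (auto simp: mem_kernel_iff dest!: spec[of _ "m + 1"])
  moreover have "c (m + 2) > 0" using c_pos[of "m + 2"] step.prems by simp
  ultimately have "v $ (m + 2) = - real (b m) * v $ m / real (c (m + 2))"
    by (simp add: eq_divide_eq add_eq_0_iff)
  then show ?case using step by (simp add: add_2_eq_Suc')
qed simp

lemma kernel_eq_smult_kernel_vec:
  assumes "v \<in> mat_kernel B"
  shows "v = v $ 0 \<cdot>\<^sub>v kernel_vec d b c"
proof (rule eq_vecI)
  have "v \<in> carrier_vec (d + 1)" using assms by (simp add: mem_kernel_iff)
  then show "dim_vec v = dim_vec (v $ 0 \<cdot>\<^sub>v kernel_vec d b c)"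
    by (simp add: kernel_vec_def)
  fix j assume "j < dim_vec (v $ 0 \<cdot>\<^sub>v kernel_vec d b c)"
  then show "v $ j = (v $ 0 \<cdot>\<^sub>v kernel_vec d b c) $ j"
    using kernel_nth_eq[OF assms, of j] by (simp add: kernel_vec_def)
qed

lemma kernel_seq_row_eq_0:
  assumes "even d" "k \<le> d"
  shows "(if k < d then real (c (k + 1)) * kernel_seq b c (k + 1) else 0)
    + (if 0 < k then real (b (k - 1)) * kernel_seq b c (k - 1) else 0) = 0"
proof -
  consider "k = 0" | "k = d" "0 < k" | m where "k = m + 1" "k < d"
    using assms(2) by (cases k) (auto simp: le_less)
  then show ?thesis
  proof cases
    case 2
    then show ?thesis using assms(1) by (simp add: kernel_seq_odd)
  next
    case 3
    then show ?thesis using c_pos[of "m + 2"] by (simp add: add_2_eq_Suc')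
  qed simp
qed

lemma kernel_vec_in_kernel_iff: "kernel_vec d b c \<in> mat_kernel B \<longleftrightarrow> even d"
proof
  assume "kernel_vec d b c \<in> mat_kernel B"
  then have "0 < d \<Longrightarrow> real (b (d - 1)) * kernel_seq b c (d - 1) = 0"
    by (auto simp: mem_kernel_iff kernel_vec_def dest!: spec[of _ d])
  then show "even d"
    using b_pos[of "d - 1"] kernel_seq_even_nonzero[of "d - 1"] by (cases d) auto
next
  assume "even d"
  show "kernel_vec d b c \<in> mat_kernel B"
    unfolding mem_kernel_iff
  proof (intro conjI allI impI)
    fix k assume "k \<le> d"
    with kernel_seq_row_eq_0[OF \<open>even d\<close> this] show "(if k < d then real (c (k + 1)) * kernel_vec d b c $ (k + 1) else 0)
      + (if 0 < k then real (b (k - 1)) * kernel_vec d b c $ (k - 1) else 0) = 0"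
      by (auto simp: kernel_vec_def)
  qed (simp add: kernel_vec_def)
qed

lemma kernel_eq_span_kernel_vec:
  assumes "even d"
  shows "mat_kernel B = {a \<cdot>\<^sub>v kernel_vec d b c | a. True}"
  using kernel_eq_smult_kernel_vec
    mat_kernel_smult[OF intersection_matrix_carrier kernel_vec_in_kernel_iff[THEN iffD2, OF assms]]
  by blast

lemma even_if_kernel_nontrivial:
  assumes "mat_kernel B \<noteq> {0\<^sub>v (d + 1)}"
  shows "even d"
proof -
  have "0\<^sub>v (d + 1) \<in> mat_kernel B" by (simp add: mem_kernel_iff)
  then obtain v where v: "v \<in> mat_kernel B" "v \<noteq> 0\<^sub>v (d + 1)"
    using assms by blast
  have "v $ 0 \<noteq> 0"
    using kernel_eq_smult_kernel_vec[OF v(1)] v(2) by (auto simp: kernel_vec_def)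
  moreover have "(1 / v $ 0) \<cdot>\<^sub>v v = (1 / v $ 0) \<cdot>\<^sub>v (v $ 0 \<cdot>\<^sub>v kernel_vec d b c)"
    using kernel_eq_smult_kernel_vec[OF v(1)] by (rule arg_cong)
  ultimately have "kernel_vec d b c = (1 / v $ 0) \<cdot>\<^sub>v v"
    by (simp add: smult_smult_assoc)
  then show ?thesis
    using mat_kernel_smult[OF intersection_matrix_carrier v(1)] kernel_vec_in_kernel_iff by simp
qed

end

lemma kernel_seq_last:
  assumes "even d" and c_pos: "\<And>i. 1 \<le> i \<Longrightarrow> i \<le> d \<Longrightarrow> c i > 0"
    and reflect: "\<And>i. i \<le> d \<Longrightarrow> b i = c (d - i)"
  shows "kernel_seq b c d = (-1) ^ (d div 2)"
proof -
  define m where "m = d div 2"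
  have d: "d = 2 * m" using assms(1) by (simp add: m_def)
  have "b (2 * k) = c (2 * (m - 1 - k) + 2)" if "k < m" for k
  proof -
    have "d - 2 * k = 2 * (m - 1 - k) + 2" using d that by simp
    then show ?thesis using reflect[of "2 * k"] d that by simp
  qed
  then have "(\<Prod>k<m. real (b (2 * k))) = (\<Prod>k<m. real (c (2 * (m - 1 - k) + 2)))"
    by simp
  also have "\<dots> = (\<Prod>k<m. real (c (2 * k + 2)))"
    by (rule prod.reindex_bij_witness[where i = "\<lambda>k. m - 1 - k" and j = "\<lambda>k. m - 1 - k"]) auto
  finally have "(\<Prod>k<m. real (b (2 * k))) = (\<Prod>k<m. real (c (2 * k + 2)))" .
  moreover have "c (2 * k + 2) \<noteq> 0" if "k < m" for k
    using c_pos[of "2 * k + 2"] d that by simp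
  ultimately show ?thesis by (simp add: d kernel_seq_even)
qed

theorem lemma2p4:
  fixes V :: "'a set" and E :: "'a \<Rightarrow> 'a \<Rightarrow> bool"
    and d :: nat and b c :: "nat \<Rightarrow> nat"
  assumes "distance_regular V E d b c"
    and "bipartite V E"
    and "antipodal_double_cover V E d"
    and "d \<ge> 1"
    and "mat_kernel (intersection_matrix d b c) \<noteq> {0\<^sub>v (d + 1)}"
  shows "even d \<and>
    (\<exists>u \<in> carrier_vec (d + 1).
       mat_kernel (intersection_matrix d b c) = {a \<cdot>\<^sub>v u | a. True} \<and>
       u $ 0 = 1 \<and> u $ 1 = 0 \<and> u $ d = (-1) ^ (d div 2))"
proof -
  interpret G: distance_regular_graph V E d b c
    using assms(1) by (rule distance_regular_graph.intro)
  interpret A: bipartite_intersection_array d b c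
    using G.b0_eq_b_plus_c_if_bipartite[OF assms(2)] G.c_pos G.b_pos by unfold_locales
  have even: "even d"
    using A.even_if_kernel_nontrivial[OF assms(5)] .
  have last: "kernel_seq b c d = (-1) ^ (d div 2)"
    using kernel_seq_last[where b = b and c = c, OF even G.c_pos G.b_eq_c_reflect[OF assms(3)]] .
  show ?thesis
  proof (intro conjI bexI)
    show "mat_kernel (intersection_matrix d b c) = {a \<cdot>\<^sub>v kernel_vec d b c | a. True}"
      using A.kernel_eq_span_kernel_vec[OF even] .
  qed (use even last assms(4) in \<open>simp_all add: kernel_vec_def\<close>)
qed

end
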